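(* Let $A$ be an $F_n$-good $n\times n$ matrix. If $A_{1,1}=1$, then $A_i=\vec{e}_i$ for all $2\leq i\leq n-1$. If $A_{1,n}=1$, then $A_i=\vec{e}_{n-i+1}$ for all $2\leq i\leq n-1$.
   Context: $F_n$ is the set of vectors $\vec{x}=(x_1,\ldots,x_n)\in\mathbb{Z}_2^n$ with no $i$ such that $x_i=x_{i+1}=1$. An $n\times n$ matrix $A$ over $\mathbb{Z}_2$ is $F_n$-good if it is invertible and $A\vec{x}\in F_n$ for all $\vec{x}\in F_n$. $A_i$ denotes the $i$-th row of $A$, $A_{i,j}$ its $(i,j)$ entry, and $\vec{e}_j$ the $j$-th standard basis vector (written as a row). *)

theory Defs
  imports "Jordan_Normal_Form.Matrix" "HOL-Library.Z2"
begin

text \<open>Indices are 0-based: paper's x_1..x_n are x $ 0 .. x $ (n-1).\<close>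

definition F_set :: "nat \<Rightarrow> bit vec set" where
  "F_set n = {x \<in> carrier_vec n. \<not> (\<exists>i. i + 1 < n \<and> x $ i = 1 \<and> x $ (i + 1) = 1)}"

definition F_good :: "nat \<Rightarrow> bit mat \<Rightarrow> bool" where
  "F_good n A \<longleftrightarrow> A \<in> carrier_mat n n \<and> invertible_mat A \<and>
     (\<forall>x \<in> F_set n. A *\<^sub>v x \<in> F_set n)"

end

theory Submission
  imports Defs
begin

text \<open>
  Two consecutive rows of an \<open>F\<^sub>n\<close>-good matrix must have supports that are
  elementwise adjacent: testing \<open>A\<close> on the characteristic vector of \<open>{j}\<close>, \<open>{k}\<close>
  and \<open>{j, k}\<close> (all in \<open>F\<^sub>n\<close> unless \<open>j\<close>, \<open>k\<close> are adjacent) shows that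
  \<open>A\<^sub>i\<^sub>,\<^sub>j = A\<^sub>i\<^sub>+\<^sub>1\<^sub>,\<^sub>k = 1\<close> forces \<open>|j - k| = 1\<close>.
  Invertibility makes the supports nonempty and pairwise distinct. A chain of such
  sets starting at a set containing \<open>0\<close> is forced to be \<open>{1}, {2}, \<dots>\<close>, since any
  deviation would make some support coincide with an earlier one. The case
  \<open>A\<^sub>1\<^sub>,\<^sub>n = 1\<close> is the same argument after reversing the column order.
\<close>

locale adjacent_chain =
  fixes n :: nat and T :: "nat \<Rightarrow> nat set"
  assumes nonempty: "i < n \<Longrightarrow> T i \<noteq> {}"
    and distinct: "i < n \<Longrightarrow> j < n \<Longrightarrow> i \<noteq> j \<Longrightarrow> T i \<noteq> T j"
    and adjacent: "i + 1 < n \<Longrightarrow> a \<in> T i \<Longrightarrow> b \<in> T (i + 1) \<Longrightarrow> a + 1 = b \<or> b + 1 = a"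
begin

lemma T_eq_singletonI: "i < n \<Longrightarrow> (\<And>b. b \<in> T i \<Longrightarrow> b = c) \<Longrightarrow> T i = {c}"
  using nonempty by blast

lemma diagonal_step:
  assumes m: "1 \<le> m" "m + 2 < n"
    and Tm: "T m = {m}"
    and T1: "T 1 = {1}"
    and Tpred: "2 \<le> m \<Longrightarrow> T (m - 1) = {m - 1}"
  shows "T (m + 1) = {m + 1}"
proof -
  have next_cases: "b = m + 1 \<or> b = m - 1" if "b \<in> T (m + 1)" for b
  proof -
    have "m + 1 = b \<or> b + 1 = m"
      using adjacent[of m m b] that Tm \<open>m + 2 < n\<close> by simp
    then show ?thesis by linarith
  qed
  have "m + 1 \<in> T (m + 1)"
  proof (rule ccontr)
    assume "m + 1 \<notin> T (m + 1)"
    then have T_succ: "T (m + 1) = {m - 1}"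
      using next_cases m by (intro T_eq_singletonI) auto
    show False
    proof (cases "m = 1")
      case True
      then have "T 2 = {0}" using T_succ by (simp add: numeral_2_eq_2)
      then have "T 3 = {1}"
        using adjacent[of 2 0] m True by (intro T_eq_singletonI) (auto simp: numeral_3_eq_3)
      then show False using distinct[of 3 1] T1 m True by simp
    next
      case False
      then have "2 \<le> m" "m - 1 < n" "m + 1 \<noteq> m - 1" using m by linarith+
      then show False using distinct[of "m + 1" "m - 1"] T_succ Tpred m by simp
    qed
  qed
  moreover have "m - 1 \<notin> T (m + 1)"
  proof
    assume "m - 1 \<in> T (m + 1)"
    have "T (m + 2) = {m}"
    proof (rule T_eq_singletonI)
      fix c assume "c \<in> T (m + 2)"
      then have c: "c \<in> T (m + 1 + 1)" by (simp add: numeral_2_eq_2)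
      have "m + 1 + 1 < n" using m by simp
      then have "m - 1 + 1 = c \<or> c + 1 = m - 1" and "m + 1 + 1 = c \<or> c + 1 = m + 1"
        using adjacent[OF _ _ c] \<open>m - 1 \<in> T (m + 1)\<close> \<open>m + 1 \<in> T (m + 1)\<close> by blast+
      then show "c = m" using m by linarith
    qed (use m in simp)
    then show False using distinct[of "m + 2" m] Tm m by simp
  qed
  ultimately show ?thesis using next_cases by blast
qed

lemma diagonal:
  assumes "0 \<in> T 0" and "1 \<le> i" and "i \<le> n - 2"
  shows "T i = {i}"
proof -
  have "1 < n" using assms(2,3) by linarith
  have T1: "T 1 = {1}"
  proof (rule T_eq_singletonI)
    fix b assume "b \<in> T 1"
    then have "0 + 1 = b \<or> b + 1 = 0" using adjacent[of 0 0 b] assms(1) \<open>1 < n\<close> by simp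
    then show "b = 1" by simp
  qed (use \<open>1 < n\<close> in simp)
  show ?thesis
    using assms(2,3)
  proof (induction i rule: less_induct)
    case (less i)
    show ?case
    proof (cases "i = 1")
      case False
      define m where "m = i - 1"
      have m: "i = m + 1" "1 \<le> m" "m + 2 < n" using False less.prems unfolding m_def by arith+
      have Tm: "T m = {m}" using less.IH[of m] m by simp
      have Tpred: "T (m - 1) = {m - 1}" if "2 \<le> m" using less.IH[of "m - 1"] m that by simp
      show ?thesis using diagonal_step[OF m(2,3) Tm T1 Tpred] m(1) by simp
    qed (use T1 in simp)
  qed
qed

end

lemma mult_mat_vec_indicator:
  fixes A :: "'a :: semiring_1 mat"
  assumes "A \<in> carrier_mat n n" and "i < n" and "X \<subseteq> {..<n}"
  shows "(A *\<^sub>v vec n (\<lambda>l. if l \<in> X then 1 else 0)) $ i = (\<Sum>l\<in>X. A $$ (i, l))"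
proof -
  have "(A *\<^sub>v vec n (\<lambda>l. if l \<in> X then 1 else 0)) $ i
      = row A i \<bullet> vec n (\<lambda>l. if l \<in> X then 1 else 0)"
    using assms by simp
  also have "\<dots> = (\<Sum>l\<in>{0..<n}. if l \<in> X then A $$ (i, l) else 0)"
    using assms unfolding scalar_prod_def by (auto intro: sum.cong)
  also have "\<dots> = (\<Sum>l\<in>{0..<n} \<inter> X. A $$ (i, l))"
    by (rule sum.inter_restrict[symmetric]) simp
  also have "\<dots> = (\<Sum>l\<in>X. A $$ (i, l))"
    using assms(3) by (simp add: Int_absorb1 atLeast0LessThan)
  finally show ?thesis .
qed

lemma indicator_vec_in_F_set:
  assumes "\<And>l. \<not> (l \<in> X \<and> l + 1 \<in> X)"
  shows "vec n (\<lambda>l. if l \<in> X then 1 else 0) \<in> F_set n"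
  using assms unfolding F_set_def by auto

lemma F_good_rows_adjacent:
  assumes good: "F_good n A" and i: "i + 1 < n" and "j < n" and "k < n"
    and "A $$ (i, j) = 1" and "A $$ (i + 1, k) = 1"
  shows "j + 1 = k \<or> k + 1 = j"
proof -
  have A: "A \<in> carrier_mat n n" and image: "\<forall>x \<in> F_set n. A *\<^sub>v x \<in> F_set n"
    using good unfolding F_good_def by auto
  have no_double_hit: "\<not> ((\<Sum>l\<in>X. A $$ (i, l)) = 1 \<and> (\<Sum>l\<in>X. A $$ (i + 1, l)) = 1)"
    if X: "X \<subseteq> {..<n}" and sparse: "\<And>l. \<not> (l \<in> X \<and> l + 1 \<in> X)" for X
  proof -
    have "A *\<^sub>v vec n (\<lambda>l. if l \<in> X then 1 else 0) \<in> F_set n"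
      using image indicator_vec_in_F_set[OF sparse] by blast
    then show ?thesis
      using i mult_mat_vec_indicator[OF A _ X, of i] mult_mat_vec_indicator[OF A _ X, of "i + 1"]
      unfolding F_set_def by auto
  qed
  have "A $$ (i + 1, j) \<noteq> 1"
    using no_double_hit[of "{j}"] assms(3,5) by auto
  moreover have "A $$ (i, k) \<noteq> 1"
    using no_double_hit[of "{k}"] assms(4,6) by auto
  ultimately have "j \<noteq> k" and "A $$ (i + 1, j) = 0" and "A $$ (i, k) = 0"
    using assms(6) by (auto simp: bit_not_one_iff)
  show ?thesis
  proof (rule ccontr)
    assume "\<not> ?thesis"
    then have "\<not> (l \<in> {j, k} \<and> l + 1 \<in> {j, k})" for l by auto
    then show False
      using no_double_hit[of "{j, k}"] \<open>j \<noteq> k\<close> \<open>A $$ (i + 1, j) = 0\<close> \<open>A $$ (i, k) = 0\<close> assms(3-6)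
      by auto
  qed
qed

lemma invertible_mat_right_inverse:
  assumes "A \<in> carrier_mat n n" and "invertible_mat A"
  obtains B where "A * B = 1\<^sub>m n" and "B \<in> carrier_mat n n"
  using assms unfolding invertible_mat_def inverts_mat_def
  by (metis carrier_matD(1,2) carrier_matI index_mult_mat(2,3) index_one_mat(2,3))

lemma invertible_mat_row_nonzero:
  fixes A :: "'a :: semiring_1 mat"
  assumes "A \<in> carrier_mat n n" and "invertible_mat A" and "i < n"
  shows "\<exists>l<n. A $$ (i, l) \<noteq> 0"
proof (rule ccontr)
  obtain B where AB: "A * B = 1\<^sub>m n" and B: "B \<in> carrier_mat n n"
    using invertible_mat_right_inverse[OF assms(1,2)] .
  assume "\<not> (\<exists>l<n. A $$ (i, l) \<noteq> 0)"
  then have "row A i \<bullet> col B i = 0"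
    using assms(1,3) B unfolding scalar_prod_def by (auto intro: sum.neutral)
  then show False
    using AB assms(1,3) B by (metis index_mult_mat(1) index_one_mat(1) carrier_matD(1,2) one_neq_zero)
qed

lemma invertible_mat_rows_distinct:
  fixes A :: "'a :: semiring_1 mat"
  assumes "A \<in> carrier_mat n n" and "invertible_mat A" and "i < n" and "j < n" and "i \<noteq> j"
  shows "\<exists>l<n. A $$ (i, l) \<noteq> A $$ (j, l)"
proof (rule ccontr)
  obtain B where AB: "A * B = 1\<^sub>m n" and B: "B \<in> carrier_mat n n"
    using invertible_mat_right_inverse[OF assms(1,2)] .
  assume "\<not> (\<exists>l<n. A $$ (i, l) \<noteq> A $$ (j, l))"
  then have "row A i = row A j" using assms(1,3,4) by (auto intro!: eq_vecI)
  then have "(A * B) $$ (i, j) = (A * B) $$ (j, j)" using assms(1,3,4) B by simp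
  then show False using AB assms(3-5) by simp
qed

text \<open>
  The bijection \<open>\<sigma>\<close> relabels the columns; it only has to reflect adjacency,
  so that the identity and the reversal \<open>a \<mapsto> n - 1 - a\<close> are both covered.
\<close>

lemma F_good_row_eq_unit_vec:
  assumes good: "F_good n A"
    and \<sigma>: "bij_betw \<sigma> {..<n} {..<n}"
    and reflects_adjacent:
      "\<And>a b. a < n \<Longrightarrow> b < n \<Longrightarrow> \<sigma> a + 1 = \<sigma> b \<or> \<sigma> b + 1 = \<sigma> a \<Longrightarrow> a + 1 = b \<or> b + 1 = a"
    and corner: "A $$ (0, \<sigma> 0) = 1"
    and i: "1 \<le> i" "i \<le> n - 2"
  shows "row A i = unit_vec n (\<sigma> i)"
proof -
  have A: "A \<in> carrier_mat n n" and inv: "invertible_mat A"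
    using good unfolding F_good_def by auto
  have \<sigma>_onto: "\<exists>a<n. \<sigma> a = l" if "l < n" for l
    using \<sigma> that unfolding bij_betw_def by (metis imageE lessThan_iff)
  have \<sigma>_range: "\<sigma> a < n" if "a < n" for a
    using \<sigma> that by (auto dest: bij_betwE)
  have \<sigma>_inj: "a = b" if "a < n" "b < n" "\<sigma> a = \<sigma> b" for a b
    using \<sigma> that unfolding bij_betw_def by (auto dest: inj_onD)
  define S where "S i = {a. a < n \<and> A $$ (i, \<sigma> a) = 1}" for i
  interpret adjacent_chain n S
  proof
    fix i assume "i < n"
    then obtain l where "l < n" "A $$ (i, l) \<noteq> 0"
      using invertible_mat_row_nonzero[OF A inv] by blast
    moreover obtain a where "a < n" "\<sigma> a = l" using \<sigma>_onto \<open>l < n\<close> by blast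
    ultimately have "a \<in> S i" unfolding S_def by (simp add: bit_not_zero_iff)
    then show "S i \<noteq> {}" by blast
  next
    fix i j assume "i < n" "j < n" "i \<noteq> j"
    then obtain l where "l < n" "A $$ (i, l) \<noteq> A $$ (j, l)"
      using invertible_mat_rows_distinct[OF A inv] by blast
    moreover obtain a where "a < n" "\<sigma> a = l" using \<sigma>_onto \<open>l < n\<close> by blast
    ultimately have "a \<in> S i \<longleftrightarrow> a \<notin> S j"
      unfolding S_def by (cases "A $$ (i, l)"; cases "A $$ (j, l)") auto
    then show "S i \<noteq> S j" by blast
  next
    fix i a b assume "i + 1 < n" "a \<in> S i" "b \<in> S (i + 1)"
    then have "a < n" "b < n" "\<sigma> a + 1 = \<sigma> b \<or> \<sigma> b + 1 = \<sigma> a"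
      using F_good_rows_adjacent[OF good, of i "\<sigma> a" "\<sigma> b"] \<sigma>_range unfolding S_def by auto
    then show "a + 1 = b \<or> b + 1 = a" by (rule reflects_adjacent)
  qed
  have "i < n" using i by linarith
  have "S i = {i}" using diagonal[OF _ i] corner \<open>i < n\<close> unfolding S_def by simp
  then have row_entry: "A $$ (i, \<sigma> a) = 1 \<longleftrightarrow> a = i" if "a < n" for a
    using that unfolding S_def by blast
  show ?thesis
  proof (rule eq_vecI)
    fix l assume "l < dim_vec (unit_vec n (\<sigma> i))"
    then obtain a where "a < n" "\<sigma> a = l" using \<sigma>_onto by auto
    then show "row A i $ l = unit_vec n (\<sigma> i) $ l"
      using row_entry[of a] \<sigma>_inj[of a i] \<sigma>_range[of a] \<open>i < n\<close> A
      by (cases "A $$ (i, l)") (auto simp: unit_vec_def)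
  qed (use A in simp)
qed

lemma bij_betw_reverse_lessThan: "bij_betw (\<lambda>a. n - 1 - a) {..<n} {..<n :: nat}"
  by (rule bij_betw_byWitness[where f' = "\<lambda>a. n - 1 - a"]) auto

theorem corollary2:
  fixes n :: nat and A :: "bit mat"
  assumes "F_good n A"
  shows "(A $$ (0, 0) = 1 \<longrightarrow> (\<forall>i. 1 \<le> i \<and> i \<le> n - 2 \<longrightarrow> row A i = unit_vec n i))
       \<and> (A $$ (0, n - 1) = 1 \<longrightarrow> (\<forall>i. 1 \<le> i \<and> i \<le> n - 2 \<longrightarrow> row A i = unit_vec n (n - 1 - i)))"
proof -
  have reversal_reflects_adjacent:
    "a + 1 = b \<or> b + 1 = a"
    if "a < n" "b < n" "(n - 1 - a) + 1 = n - 1 - b \<or> (n - 1 - b) + 1 = n - 1 - a" for a b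
    using that by linarith
  show ?thesis
  proof (intro conjI impI allI; elim conjE)
    fix i assume "A $$ (0, 0) = 1" "1 \<le> i" "i \<le> n - 2"
    then have "row A i = unit_vec n (id i)"
      by (intro F_good_row_eq_unit_vec[OF assms bij_betw_id]) simp_all
    then show "row A i = unit_vec n i" by simp
  next
    fix i assume "A $$ (0, n - 1) = 1" "1 \<le> i" "i \<le> n - 2"
    then show "row A i = unit_vec n (n - 1 - i)"
      by (intro F_good_row_eq_unit_vec[OF assms bij_betw_reverse_lessThan reversal_reflects_adjacent])
        simp_all
  qed
qed

end
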